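(* Let $\mathcal{P}_1,\dots,\mathcal{P}_k$ be finite posets and $\mathbf{T}\in\mathbb{R}^{\mathcal{P}_1\times\cdots\times\mathcal{P}_k}$. If $\mathbf{T}$ has an optimal unconstrained rank-$r$ approximation $\mathbf{T}^{(r)}$, i.e. a minimizer of $\Vert\mathbf{T}-\boldsymbol\theta\Vert_F^2$ over all tensors $\boldsymbol\theta$ of (real CP) rank at most $r$, and $\mathbf{T}^{(r)}\in\mathcal{N}_{\le r}$, then $\mathbf{T}^{(r)}$ is a minimizer of $\Vert\mathbf{T}-\boldsymbol\theta\Vert_F^2$ over $\boldsymbol\theta\in\mathcal{N}_{\le r}$. For matrices ($k=2$), if the best rank-at-most-two approximation $\mathbf{T}^{(2)}$ satisfies $\mathbf{T}^{(2)}\in\mathcal{N}_{<\infty}$, then $\mathbf{T}^{(2)}$ is a minimizer of $\Vert\mathbf{T}-\boldsymbol\theta\Vert_F^2$ over $\boldsymbol\theta\in\mathcal{N}_{\le 2}$.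
   Context: For a finite poset $\mathcal{Q}$, the order cone $\mathcal{C}(\mathcal{Q})$ is the set of $\mathbf{f}\in\mathbb{R}^{\mathcal{Q}}$ with $f_x\ge0$ for all $x$ and $f_x\le f_y$ whenever $x\preceq y$. $\mathcal{N}_{\le r}$ is the set of tensors of the form $\sum_{i=1}^r\otimes_{j=1}^k\mathbf{v}^{(ij)}$ with $\mathbf{v}^{(ij)}\in\mathcal{C}(\mathcal{P}_j)$, and $\mathcal{N}_{<\infty}=\bigcup_r\mathcal{N}_{\le r}$. The real (CP) rank of a tensor is the minimal number of real rank-one tensors $\otimes_j\mathbf{v}^{(j)}$ summing to it. $\Vert\cdot\Vert_F$ is the Frobenius norm. *)

theory Defs
  imports Complex_Main "HOL-Library.FuncSet"
begin

text \<open>Tensors over index sets P 0, ..., P (k-1) are real functions on index tuples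
  x :: nat \<Rightarrow> 'a; only their values on the box PiE {..<k} P matter.\<close>

definition tbox :: "nat \<Rightarrow> (nat \<Rightarrow> 'a set) \<Rightarrow> (nat \<Rightarrow> 'a) set" where
  "tbox k P = PiE {..<k} P"

definition frob_dist2 :: "nat \<Rightarrow> (nat \<Rightarrow> 'a set) \<Rightarrow> ((nat \<Rightarrow> 'a) \<Rightarrow> real) \<Rightarrow> ((nat \<Rightarrow> 'a) \<Rightarrow> real) \<Rightarrow> real" where
  "frob_dist2 k P T S = (\<Sum>x\<in>tbox k P. (T x - S x)^2)"

definition rank_le :: "nat \<Rightarrow> (nat \<Rightarrow> 'a set) \<Rightarrow> nat \<Rightarrow> ((nat \<Rightarrow> 'a) \<Rightarrow> real) set" where
  "rank_le k P r = {S. \<exists>v :: nat \<Rightarrow> nat \<Rightarrow> 'a \<Rightarrow> real.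
      \<forall>x\<in>tbox k P. S x = (\<Sum>i<r. \<Prod>j<k. v i j (x j))}"

definition order_cone :: "'a set \<Rightarrow> 'a rel \<Rightarrow> ('a \<Rightarrow> real) set" where
  "order_cone A R = {f. (\<forall>x\<in>A. 0 \<le> f x) \<and> (\<forall>x\<in>A. \<forall>y\<in>A. (x, y) \<in> R \<longrightarrow> f x \<le> f y)}"

definition N_le :: "nat \<Rightarrow> (nat \<Rightarrow> 'a set) \<Rightarrow> (nat \<Rightarrow> 'a rel) \<Rightarrow> nat \<Rightarrow> ((nat \<Rightarrow> 'a) \<Rightarrow> real) set" where
  "N_le k P R r = {S. \<exists>v :: nat \<Rightarrow> nat \<Rightarrow> 'a \<Rightarrow> real.
      (\<forall>i<r. \<forall>j<k. v i j \<in> order_cone (P j) (R j)) \<and>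
      (\<forall>x\<in>tbox k P. S x = (\<Sum>i<r. \<Prod>j<k. v i j (x j)))}"

definition N_fin :: "nat \<Rightarrow> (nat \<Rightarrow> 'a set) \<Rightarrow> (nat \<Rightarrow> 'a rel) \<Rightarrow> ((nat \<Rightarrow> 'a) \<Rightarrow> real) set" where
  "N_fin k P R = (\<Union>r. N_le k P R r)"

definition is_minimizer :: "nat \<Rightarrow> (nat \<Rightarrow> 'a set) \<Rightarrow> ((nat \<Rightarrow> 'a) \<Rightarrow> real) \<Rightarrow> ((nat \<Rightarrow> 'a) \<Rightarrow> real) set \<Rightarrow> ((nat \<Rightarrow> 'a) \<Rightarrow> real) \<Rightarrow> bool" where
  "is_minimizer k P T M S \<longleftrightarrow> S \<in> M \<and> (\<forall>\<theta>\<in>M. frob_dist2 k P T S \<le> frob_dist2 k P T \<theta>)"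

end

theory Submission
  imports Defs "HOL-Analysis.Euclidean_Space"
begin

(* The first claim holds because N_{<= r} consists of tensors of rank at most r.
   For the second, write T2 as a matrix M a b = y a \<bullet> z b with y, z valued in R^2.
   Membership in N_{<oo} makes every column of M, and every increment of columns along
   the order on P 1, a vector of the order cone of P 0.  If the y a span R^2, the
   coefficient vectors of these columns and increments lie in an open half-plane, hence
   in the wedge spanned by the two of them of extreme slope.  Cramer's rule in that wedge
   gives M = f0 g0^T + f1 g1^T with f0, f1 in the order cone of P 0 and g0, g1 nonnegative
   and monotone, the latter because the increments lie in the wedge too.  In the degenerate
   configurations M has rank one, and one of its columns and one of its rows factor it. *)

unbundle inner_syntax

definition det2 :: "real \<times> real \<Rightarrow> real \<times> real \<Rightarrow> real" where
  "det2 x y = fst x * snd y - snd x * fst y"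

lemma linear_det2_left: "linear (\<lambda>x. det2 x y)"
  by (rule linearI) (auto simp: det2_def algebra_simps)

lemma linear_det2_right: "linear (det2 x)"
  by (rule linearI) (auto simp: det2_def algebra_simps)

lemma det2_Lagrange_identity: "(g \<bullet> x) * (g \<bullet> y) + det2 g x * det2 g y = (g \<bullet> g) * (x \<bullet> y)"
  by (cases g; cases x; cases y) (simp add: det2_def algebra_simps)

lemma det2_Cramer: "det2 a b * (w \<bullet> g) = det2 g b * (w \<bullet> a) + det2 a g * (w \<bullet> b)"
  by (cases a; cases b; cases g; cases w) (simp add: det2_def algebra_simps)

definition slope :: "real \<times> real \<Rightarrow> real \<times> real \<Rightarrow> real" where
  "slope s g = det2 s g / (s \<bullet> g)"

lemma det2_eq_slope_diff:
  assumes "s \<bullet> g \<noteq> 0" "s \<bullet> h \<noteq> 0"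
  shows "(s \<bullet> s) * det2 g h = (s \<bullet> g) * (s \<bullet> h) * (slope s h - slope s g)"
proof -
  have "(s \<bullet> s) * det2 g h = (s \<bullet> g) * det2 s h - (s \<bullet> h) * det2 s g"
    by (cases s; cases g; cases h) (simp add: det2_def algebra_simps)
  then show ?thesis
    using assms by (simp add: slope_def algebra_simps)
qed

lemma finite_halfplane_ray_or_wedge:
  fixes G :: "(real \<times> real) set"
  assumes "finite G" and halfplane: "\<forall>g\<in>G. g \<noteq> 0 \<longrightarrow> 0 < s \<bullet> g"
  shows "(\<exists>c. c \<noteq> 0 \<and> (\<forall>g\<in>G. det2 c g = 0))
    \<or> (\<exists>a\<in>G. \<exists>b\<in>G. 0 < det2 a b \<and> (\<forall>g\<in>G. 0 \<le> det2 a g \<and> 0 \<le> det2 g b))"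
proof (cases "G \<subseteq> {0}")
  case True
  then have "\<forall>g\<in>G. det2 (1, 0) g = 0"
    by (auto simp: det2_def)
  then show ?thesis
    by (metis fst_zero zero_neq_one fst_conv)
next
  case False
  define X where "X = G - {0}"
  have X: "finite X" "X \<noteq> {}"
    using False \<open>finite G\<close> by (auto simp: X_def)
  have pos: "0 < s \<bullet> g" if "g \<in> X" for g
    using halfplane that by (simp add: X_def)
  have "s \<noteq> 0"
    using pos X by fastforce
  then have "0 < s \<bullet> s"
    by simp
  have det2_sign: "sgn (det2 g h) = sgn (slope s h - slope s g)" if "g \<in> X" "h \<in> X" for g h
  proof -
    have "sgn (s \<bullet> s) * sgn (det2 g h) = sgn (s \<bullet> g) * sgn (s \<bullet> h) * sgn (slope s h - slope s g)"
      using det2_eq_slope_diff[of s g h] pos[OF that(1)] pos[OF that(2)] by (metis sgn_mult less_irrefl)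
    then show ?thesis
      using \<open>0 < s \<bullet> s\<close> pos[OF that(1)] pos[OF that(2)] by simp
  qed
  have det2_zero: "det2 g 0 = 0" "det2 0 g = 0" for g
    by (simp_all add: det2_def)
  obtain a where a: "a \<in> X" "\<forall>g\<in>X. slope s a \<le> slope s g"
    using arg_min_if_finite[OF X, of "slope s"] by (metis not_le)
  obtain b where b: "b \<in> X" "\<forall>g\<in>X. slope s g \<le> slope s b"
    using arg_min_if_finite[OF X, of "\<lambda>g. - slope s g"] by (metis neg_le_iff_le not_le)
  show ?thesis
  proof (cases "slope s a = slope s b")
    case True
    have "det2 a g = 0" if "g \<in> G" for g
    proof (cases "g = 0")
      case False
      then have "g \<in> X"
        using that by (simp add: X_def)
      then have "slope s g = slope s a"
        using a b True by (metis order_antisym)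
      then show ?thesis
        using det2_sign[OF a(1) \<open>g \<in> X\<close>] by (simp add: sgn_0_0)
    qed (simp add: det2_zero)
    then show ?thesis
      using a(1) unfolding X_def by blast
  next
    case False
    then have "slope s a < slope s b"
      using a b(1) by (simp add: order_less_le)
    then have "0 < det2 a b"
      using det2_sign[OF a(1) b(1)] by (metis diff_gt_0_iff_gt sgn_greater)
    moreover have "0 \<le> det2 a g \<and> 0 \<le> det2 g b" if "g \<in> G" for g
    proof (cases "g = 0")
      case False
      then have "g \<in> X" using that by (simp add: X_def)
      then show ?thesis
        using a b det2_sign[OF a(1)] det2_sign[OF _ b(1)] by (metis diff_ge_0_iff_ge zero_le_sgn_iff)
    qed (simp add: det2_zero)
    ultimately show ?thesis
      using a(1) b(1) unfolding X_def by blast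
  qed
qed

lemma order_cone_zero: "(\<lambda>_. 0) \<in> order_cone A R"
  by (simp add: order_cone_def)

lemma order_cone_cong: "f \<in> order_cone A R \<Longrightarrow> (\<And>a. a \<in> A \<Longrightarrow> f a = g a) \<Longrightarrow> g \<in> order_cone A R"
  by (simp add: order_cone_def)

lemma order_cone_scale: "f \<in> order_cone A R \<Longrightarrow> 0 \<le> c \<Longrightarrow> (\<lambda>a. c * f a) \<in> order_cone A R"
  by (auto simp: order_cone_def intro: mult_left_mono)

lemma order_cone_nonneg_comb:
  assumes "\<And>i. i \<in> I \<Longrightarrow> u i \<in> order_cone A R \<and> 0 \<le> c i"
  shows "(\<lambda>a. \<Sum>i\<in>I. c i * u i a) \<in> order_cone A R"
  using assms by (auto simp: order_cone_def intro!: sum_nonneg sum_mono mult_left_mono)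

definition order_cone_matrix :: "'a set \<Rightarrow> 'a rel \<Rightarrow> 'b set \<Rightarrow> 'b rel \<Rightarrow> ('a \<Rightarrow> 'b \<Rightarrow> real) \<Rightarrow> bool" where
  "order_cone_matrix A RA B RB M \<longleftrightarrow>
     (\<forall>b\<in>B. (\<lambda>a. M a b) \<in> order_cone A RA) \<and> (\<forall>a\<in>A. (\<lambda>b. M a b) \<in> order_cone B RB) \<and>
     (\<forall>b\<in>B. \<forall>b'\<in>B. (b, b') \<in> RB \<longrightarrow> (\<lambda>a. M a b' - M a b) \<in> order_cone A RA)"

definition cone_rank_le :: "'a set \<Rightarrow> 'a rel \<Rightarrow> 'b set \<Rightarrow> 'b rel \<Rightarrow> nat \<Rightarrow> ('a \<Rightarrow> 'b \<Rightarrow> real) \<Rightarrow> bool" where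
  "cone_rank_le A RA B RB r M \<longleftrightarrow> (\<exists>u v. (\<forall>i<r. u i \<in> order_cone A RA \<and> v i \<in> order_cone B RB) \<and>
     (\<forall>a\<in>A. \<forall>b\<in>B. M a b = (\<Sum>i<r. u i a * v i b)))"

lemma order_cone_matrix_if_cone_rank_le:
  assumes "cone_rank_le A RA B RB r M"
  shows "order_cone_matrix A RA B RB M"
proof -
  obtain u v where uv: "\<forall>i<r. u i \<in> order_cone A RA \<and> v i \<in> order_cone B RB"
    and M: "\<forall>a\<in>A. \<forall>b\<in>B. M a b = (\<Sum>i<r. u i a * v i b)"
    using assms by (auto simp: cone_rank_le_def)
  have "(\<lambda>a. M a b) \<in> order_cone A RA" if "b \<in> B" for b
  proof (rule order_cone_cong)
    show "(\<lambda>a. \<Sum>i<r. v i b * u i a) \<in> order_cone A RA"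
      using uv that by (intro order_cone_nonneg_comb) (auto simp: order_cone_def)
  qed (simp add: M that mult.commute)
  moreover have "(\<lambda>b. M a b) \<in> order_cone B RB" if "a \<in> A" for a
  proof (rule order_cone_cong)
    show "(\<lambda>b. \<Sum>i<r. u i a * v i b) \<in> order_cone B RB"
      using uv that by (intro order_cone_nonneg_comb) (auto simp: order_cone_def)
  qed (simp add: M that)
  moreover have "(\<lambda>a. M a b' - M a b) \<in> order_cone A RA"
    if "b \<in> B" "b' \<in> B" "(b, b') \<in> RB" for b b'
  proof (rule order_cone_cong)
    show "(\<lambda>a. \<Sum>i<r. (v i b' - v i b) * u i a) \<in> order_cone A RA"
      using uv that by (intro order_cone_nonneg_comb) (auto simp: order_cone_def)
  qed (simp add: M that sum_subtractf[symmetric] algebra_simps)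
  ultimately show ?thesis
    unfolding order_cone_matrix_def by blast
qed

lemma cone_rank_le_mono:
  assumes "cone_rank_le A RA B RB r M" "r \<le> r'"
  shows "cone_rank_le A RA B RB r' M"
proof -
  obtain u v where uv: "\<forall>i<r. u i \<in> order_cone A RA \<and> v i \<in> order_cone B RB"
    and M: "\<forall>a\<in>A. \<forall>b\<in>B. M a b = (\<Sum>i<r. u i a * v i b)"
    using assms by (auto simp: cone_rank_le_def)
  define u' where "u' i = (if i < r then u i else (\<lambda>_. 0))" for i
  define v' where "v' i = (if i < r then v i else (\<lambda>_. 0))" for i
  have "\<forall>i<r'. u' i \<in> order_cone A RA \<and> v' i \<in> order_cone B RB"
    using uv by (simp add: u'_def v'_def order_cone_zero)
  moreover have "(\<Sum>i<r'. u' i a * v' i b) = (\<Sum>i<r. u i a * v i b)" for a b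
    using \<open>r \<le> r'\<close> by (intro sum.mono_neutral_cong_right) (auto simp: u'_def v'_def)
  ultimately show ?thesis
    unfolding cone_rank_le_def using M by metis
qed

lemma cone_rank_le_2I:
  assumes "f0 \<in> order_cone A RA" "f1 \<in> order_cone A RA" "g0 \<in> order_cone B RB" "g1 \<in> order_cone B RB"
    and "\<forall>a\<in>A. \<forall>b\<in>B. M a b = f0 a * g0 b + f1 a * g1 b"
  shows "cone_rank_le A RA B RB 2 M"
  unfolding cone_rank_le_def
proof (intro exI conjI)
  show "\<forall>i::nat<2. (if i = 0 then f0 else f1) \<in> order_cone A RA \<and> (if i = 0 then g0 else g1) \<in> order_cone B RB"
    using assms by simp
  show "\<forall>a\<in>A. \<forall>b\<in>B. M a b = (\<Sum>i::nat<2. (if i = 0 then f0 else f1) a * (if i = 0 then g0 else g1) b)"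
    using assms by (simp add: numeral_2_eq_2)
qed

lemma cone_rank_le_1_if_rank_one:
  assumes M_cone: "order_cone_matrix A RA B RB M" and M: "\<forall>a\<in>A. \<forall>b\<in>B. M a b = u a * v b"
  shows "cone_rank_le A RA B RB 1 M"
proof (cases "\<forall>a\<in>A. \<forall>b\<in>B. M a b = 0")
  case True
  then show ?thesis
    unfolding cone_rank_le_def by (intro exI[of _ "\<lambda>_ _. 0"]) (simp add: order_cone_zero)
next
  case False
  then obtain a0 b0 where ab0: "a0 \<in> A" "b0 \<in> B" "M a0 b0 \<noteq> 0"
    by blast
  have col: "(\<lambda>a. M a b0) \<in> order_cone A RA" and row: "(\<lambda>b. M a0 b) \<in> order_cone B RB"
    using M_cone ab0 by (auto simp: order_cone_matrix_def)
  then have "0 < M a0 b0"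
    using ab0 by (auto simp: order_cone_def order_less_le)
  then have "(\<lambda>b. (1 / M a0 b0) * M a0 b) \<in> order_cone B RB"
    using row by (intro order_cone_scale) simp_all
  moreover have "M a b = M a b0 * ((1 / M a0 b0) * M a0 b)" if "a \<in> A" "b \<in> B" for a b
  proof -
    have "M a b * M a0 b0 = M a b0 * M a0 b"
      using M ab0 that by simp
    then show ?thesis
      using ab0 by (simp add: field_simps)
  qed
  ultimately show ?thesis
    unfolding cone_rank_le_def using col by (intro exI[of _ "\<lambda>_. _"]) auto
qed

(* The increments are included so that a linear functional that is nonnegative on this set
   is also monotone along RB when composed with z. *)
definition column_coeffs :: "'b set \<Rightarrow> 'b rel \<Rightarrow> ('b \<Rightarrow> real \<times> real) \<Rightarrow> (real \<times> real) set" where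
  "column_coeffs B RB z = z ` B \<union> {z b' - z b | b b'. b \<in> B \<and> b' \<in> B \<and> (b, b') \<in> RB}"

lemma finite_column_coeffs:
  assumes "finite B"
  shows "finite (column_coeffs B RB z)"
proof -
  have "{z b' - z b | b b'. b \<in> B \<and> b' \<in> B \<and> (b, b') \<in> RB} \<subseteq> (\<lambda>(b, b'). z b' - z b) ` (B \<times> B)"
    by auto
  moreover have "finite ((\<lambda>(b, b'). z b' - z b) ` (B \<times> B))"
    using assms by simp
  ultimately have "finite {z b' - z b | b b'. b \<in> B \<and> b' \<in> B \<and> (b, b') \<in> RB}"
    by (rule finite_subset)
  then show ?thesis
    unfolding column_coeffs_def using assms by simp
qed

lemma order_cone_if_column_coeffs:
  assumes M_cone: "order_cone_matrix A RA B RB M" and M: "\<forall>a\<in>A. \<forall>b\<in>B. M a b = y a \<bullet> z b"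
    and "g \<in> column_coeffs B RB z"
  shows "(\<lambda>a. y a \<bullet> g) \<in> order_cone A RA"
  using \<open>g \<in> column_coeffs B RB z\<close> unfolding column_coeffs_def
proof (elim UnE imageE CollectE exE conjE)
  fix b assume "g = z b" "b \<in> B"
  then show ?thesis
    using M_cone M by (auto simp: order_cone_matrix_def elim!: order_cone_cong)
next
  fix b b' assume "g = z b' - z b" "b \<in> B" "b' \<in> B" "(b, b') \<in> RB"
  then have "(\<lambda>a. M a b' - M a b) \<in> order_cone A RA"
    using M_cone by (simp add: order_cone_matrix_def)
  then show ?thesis
    by (rule order_cone_cong) (simp add: M \<open>g = z b' - z b\<close> \<open>b \<in> B\<close> \<open>b' \<in> B\<close> inner_diff_right)
qed

lemma order_cone_linear_column_coeffs:
  assumes "linear h" and nonneg: "\<forall>g\<in>column_coeffs B RB z. 0 \<le> h g"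
  shows "(\<lambda>b. h (z b)) \<in> order_cone B RB"
  unfolding order_cone_def
proof (intro CollectI conjI ballI impI)
  fix b assume "b \<in> B"
  then show "0 \<le> h (z b)"
    using nonneg by (simp add: column_coeffs_def)
next
  fix b b' assume "b \<in> B" "b' \<in> B" "(b, b') \<in> RB"
  then have "0 \<le> h (z b' - z b)"
    using nonneg by (auto simp: column_coeffs_def)
  then show "h (z b) \<le> h (z b')"
    using linear_diff[OF \<open>linear h\<close>] by simp
qed

lemma column_coeffs_in_open_halfplane:
  fixes y :: "'a \<Rightarrow> real \<times> real" and z :: "'b \<Rightarrow> real \<times> real"
  assumes "finite A" and M_cone: "order_cone_matrix A RA B RB M"
    and M: "\<forall>a\<in>A. \<forall>b\<in>B. M a b = y a \<bullet> z b"
    and independent: "\<forall>g. (\<forall>a\<in>A. y a \<bullet> g = 0) \<longrightarrow> g = 0"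
    and "g \<in> column_coeffs B RB z" "g \<noteq> 0"
  shows "0 < (\<Sum>a\<in>A. y a) \<bullet> g"
proof -
  have nonneg: "\<forall>a\<in>A. 0 \<le> y a \<bullet> g"
    using order_cone_if_column_coeffs[OF M_cone M \<open>g \<in> column_coeffs B RB z\<close>]
    by (simp add: order_cone_def)
  obtain a where "a \<in> A" "y a \<bullet> g \<noteq> 0"
    using independent \<open>g \<noteq> 0\<close> by blast
  with nonneg have "0 < (\<Sum>a\<in>A. y a \<bullet> g)"
    using \<open>finite A\<close> by (intro sum_pos2[of A a]) (auto simp: order_less_le)
  then show ?thesis
    by (simp add: inner_sum_left)
qed

lemma cone_rank_le_2_if_independent:
  fixes y :: "'a \<Rightarrow> real \<times> real" and z :: "'b \<Rightarrow> real \<times> real"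
  assumes "finite A" "finite B" and M_cone: "order_cone_matrix A RA B RB M"
    and M: "\<forall>a\<in>A. \<forall>b\<in>B. M a b = y a \<bullet> z b"
    and independent: "\<forall>g. (\<forall>a\<in>A. y a \<bullet> g = 0) \<longrightarrow> g = 0"
  shows "cone_rank_le A RA B RB 2 M"
proof -
  let ?G = "column_coeffs B RB z"
  have "\<forall>g\<in>?G. g \<noteq> 0 \<longrightarrow> 0 < (\<Sum>a\<in>A. y a) \<bullet> g"
    using column_coeffs_in_open_halfplane[OF \<open>finite A\<close> M_cone M independent] by blast
  then consider (ray) c where "c \<noteq> 0" "\<forall>g\<in>?G. det2 c g = 0"
    | (wedge) e e' where "e \<in> ?G" "e' \<in> ?G" "0 < det2 e e'" "\<forall>g\<in>?G. 0 \<le> det2 e g \<and> 0 \<le> det2 g e'"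
    using finite_halfplane_ray_or_wedge[OF finite_column_coeffs[OF \<open>finite B\<close>]] by blast
  then show ?thesis
  proof cases
    case ray
    have "\<forall>a\<in>A. \<forall>b\<in>B. M a b = (c \<bullet> y a) * ((c \<bullet> z b) / (c \<bullet> c))"
    proof (intro ballI)
      fix a b assume ab: "a \<in> A" "b \<in> B"
      have "det2 c (z b) = 0"
        using ray ab by (simp add: column_coeffs_def)
      then have "(c \<bullet> c) * (y a \<bullet> z b) = (c \<bullet> y a) * (c \<bullet> z b)"
        using det2_Lagrange_identity[of c "y a" "z b"] by simp
      then show "M a b = (c \<bullet> y a) * ((c \<bullet> z b) / (c \<bullet> c))"
        using M ab \<open>c \<noteq> 0\<close> by (simp add: field_simps)
    qed
    then have "cone_rank_le A RA B RB 1 M"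
      by (rule cone_rank_le_1_if_rank_one[OF M_cone])
    then show ?thesis
      by (rule cone_rank_le_mono) simp
  next
    case wedge
    define d where "d = det2 e e'"
    have "0 \<le> 1 / d"
      using wedge by (simp add: d_def)
    have g0: "(\<lambda>b. 1 / d * det2 (z b) e') \<in> order_cone B RB"
      using wedge \<open>0 \<le> 1 / d\<close> linear_det2_left
      by (intro order_cone_scale order_cone_linear_column_coeffs) auto
    have g1: "(\<lambda>b. 1 / d * det2 e (z b)) \<in> order_cone B RB"
      using wedge \<open>0 \<le> 1 / d\<close> linear_det2_right
      by (intro order_cone_scale order_cone_linear_column_coeffs[where h = "det2 e"]) auto
    have Cramer: "\<forall>a\<in>A. \<forall>b\<in>B.
        M a b = (y a \<bullet> e) * (1 / d * det2 (z b) e') + (y a \<bullet> e') * (1 / d * det2 e (z b))"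
      using det2_Cramer[of e e' "y _" "z _"] M wedge(3) by (simp add: d_def field_simps)
    show ?thesis
      using order_cone_if_column_coeffs[OF M_cone M] wedge(1,2)
      by (intro cone_rank_le_2I[OF _ _ g0 g1 Cramer])
  qed
qed

lemma cone_rank_le_2_if_rank_le_2:
  fixes y :: "'a \<Rightarrow> real \<times> real" and z :: "'b \<Rightarrow> real \<times> real"
  assumes "finite A" "finite B" and M_cone: "order_cone_matrix A RA B RB M"
    and M: "\<forall>a\<in>A. \<forall>b\<in>B. M a b = y a \<bullet> z b"
  shows "cone_rank_le A RA B RB 2 M"
proof (cases "\<forall>g. (\<forall>a\<in>A. y a \<bullet> g = 0) \<longrightarrow> g = 0")
  case True
  then show ?thesis
    using cone_rank_le_2_if_independent[OF assms] by blast
next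
  case False
  then obtain g where "g \<noteq> 0" "\<forall>a\<in>A. y a \<bullet> g = 0"
    by blast
  have "\<forall>a\<in>A. \<forall>b\<in>B. M a b = det2 g (y a) * (det2 g (z b) / (g \<bullet> g))"
  proof (intro ballI)
    fix a b assume ab: "a \<in> A" "b \<in> B"
    have "(g \<bullet> g) * (y a \<bullet> z b) = det2 g (y a) * det2 g (z b)"
      using det2_Lagrange_identity[of g "y a" "z b"] \<open>\<forall>a\<in>A. y a \<bullet> g = 0\<close> ab
      by (simp add: inner_commute)
    then show "M a b = det2 g (y a) * (det2 g (z b) / (g \<bullet> g))"
      using M ab \<open>g \<noteq> 0\<close> by (simp add: field_simps)
  qed
  then have "cone_rank_le A RA B RB 1 M"
    by (rule cone_rank_le_1_if_rank_one[OF M_cone])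
  then show ?thesis
    by (rule cone_rank_le_mono) simp
qed

definition pair_index :: "'a \<Rightarrow> 'a \<Rightarrow> nat \<Rightarrow> 'a" where
  "pair_index a b = (\<lambda>_. undefined)(0 := a, 1 := b)"

lemma ball_tbox_2: "(\<forall>x\<in>tbox 2 P. Q x) \<longleftrightarrow> (\<forall>a\<in>P 0. \<forall>b\<in>P 1. Q (pair_index a b))"
proof
  assume "\<forall>x\<in>tbox 2 P. Q x"
  moreover have "pair_index a b \<in> tbox 2 P" if "a \<in> P 0" "b \<in> P 1" for a b
    using that by (auto simp: tbox_def pair_index_def PiE_iff extensional_def less_2_cases_iff)
  ultimately show "\<forall>a\<in>P 0. \<forall>b\<in>P 1. Q (pair_index a b)"
    by blast
next
  assume Q: "\<forall>a\<in>P 0. \<forall>b\<in>P 1. Q (pair_index a b)"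
  show "\<forall>x\<in>tbox 2 P. Q x"
  proof
    fix x assume "x \<in> tbox 2 P"
    then have "x 0 \<in> P 0" "x 1 \<in> P 1" "x = pair_index (x 0) (x 1)"
      by (auto simp: tbox_def pair_index_def PiE_iff extensional_def)
    then show "Q x"
      using Q by metis
  qed
qed

lemma prod_pair_index: "(\<Prod>j<2. v j (pair_index a b j)) = v 0 a * v 1 (b :: 'a)"
  by (simp add: pair_index_def numeral_2_eq_2)

lemma N_le_2_iff:
  "T \<in> N_le 2 P R r \<longleftrightarrow> cone_rank_le (P 0) (R 0) (P 1) (R 1) r (\<lambda>a b. T (pair_index a b))"
proof
  assume "T \<in> N_le 2 P R r"
  then obtain v where "\<forall>i<r. \<forall>j<2. v i j \<in> order_cone (P j) (R j)"
    "\<forall>a\<in>P 0. \<forall>b\<in>P 1. T (pair_index a b) = (\<Sum>i<r. v i 0 a * v i 1 b)"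
    by (auto simp: N_le_def ball_tbox_2 prod_pair_index)
  then show "cone_rank_le (P 0) (R 0) (P 1) (R 1) r (\<lambda>a b. T (pair_index a b))"
    unfolding cone_rank_le_def by (intro exI[of _ "\<lambda>i. v i 0"] exI[of _ "\<lambda>i. v i 1"]) simp
next
  assume "cone_rank_le (P 0) (R 0) (P 1) (R 1) r (\<lambda>a b. T (pair_index a b))"
  then obtain u w where "\<forall>i<r. u i \<in> order_cone (P 0) (R 0) \<and> w i \<in> order_cone (P 1) (R 1)"
    "\<forall>a\<in>P 0. \<forall>b\<in>P 1. T (pair_index a b) = (\<Sum>i<r. u i a * w i b)"
    by (auto simp: cone_rank_le_def)
  then show "T \<in> N_le 2 P R r"
    unfolding N_le_def ball_tbox_2 prod_pair_index
    by (intro CollectI exI[of _ "\<lambda>i j. if j = 0 then u i else w i"]) (simp add: less_2_cases_iff)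
qed

lemma rank_le_2_2_inner:
  assumes "T \<in> rank_le 2 P 2"
  shows "\<exists>(y :: 'a \<Rightarrow> real \<times> real) z. \<forall>a\<in>P 0. \<forall>b\<in>P 1. T (pair_index a b) = y a \<bullet> z b"
proof -
  obtain v where "\<forall>x\<in>tbox 2 P. T x = (\<Sum>i::nat<2. \<Prod>j<2. v i j (x j))"
    using assms by (auto simp: rank_le_def)
  then have "\<forall>a\<in>P 0. \<forall>b\<in>P 1. T (pair_index a b) = (v 0 0 a, v 1 0 a) \<bullet> (v 0 1 b, v 1 1 b)"
    unfolding ball_tbox_2 prod_pair_index by (simp add: numeral_2_eq_2)
  then show ?thesis
    by (intro exI[of _ "\<lambda>a. (v 0 0 a, v 1 0 a)"] exI[of _ "\<lambda>b. (v 0 1 b, v 1 1 b)"])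
qed

lemma N_fin_inter_rank_le_2_subset:
  assumes "finite (P 0)" "finite (P 1)"
  shows "N_fin 2 P R \<inter> rank_le 2 P 2 \<subseteq> N_le 2 P R 2"
proof
  fix T assume T: "T \<in> N_fin 2 P R \<inter> rank_le 2 P 2"
  then obtain r where "T \<in> N_le 2 P R r"
    by (auto simp: N_fin_def)
  then have cone: "order_cone_matrix (P 0) (R 0) (P 1) (R 1) (\<lambda>a b. T (pair_index a b))"
    by (simp add: N_le_2_iff order_cone_matrix_if_cone_rank_le)
  obtain y z :: "'a \<Rightarrow> real \<times> real" where inner: "\<forall>a\<in>P 0. \<forall>b\<in>P 1. T (pair_index a b) = y a \<bullet> z b"
    using rank_le_2_2_inner T by (metis IntD2)
  show "T \<in> N_le 2 P R 2"
    unfolding N_le_2_iff by (rule cone_rank_le_2_if_rank_le_2[OF assms cone inner])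
qed

lemma N_le_subset_rank_le: "N_le k P R r \<subseteq> rank_le k P r"
  by (auto simp: N_le_def rank_le_def)

lemma is_minimizer_subset:
  "is_minimizer k P T M S \<Longrightarrow> S \<in> M' \<Longrightarrow> M' \<subseteq> M \<Longrightarrow> is_minimizer k P T M' S"
  by (auto simp: is_minimizer_def)

theorem lemma11:
  fixes k :: nat and P :: "nat \<Rightarrow> 'a set" and R :: "nat \<Rightarrow> 'a rel"
    and T :: "(nat \<Rightarrow> 'a) \<Rightarrow> real"
  assumes "\<forall>j<k. finite (P j)"
    and "\<forall>j<k. partial_order_on (P j) (R j)"
  shows "(\<forall>r Tr. is_minimizer k P T (rank_le k P r) Tr \<and> Tr \<in> N_le k P R r
              \<longrightarrow> is_minimizer k P T (N_le k P R r) Tr)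
       \<and> (k = 2 \<longrightarrow> (\<forall>T2. is_minimizer k P T (rank_le k P 2) T2 \<and> T2 \<in> N_fin k P R
              \<longrightarrow> is_minimizer k P T (N_le k P R 2) T2))"
proof -
  have restrict: "is_minimizer k P T (N_le k P R r) Tr"
    if "is_minimizer k P T (rank_le k P r) Tr" "Tr \<in> N_le k P R r" for r Tr
    using is_minimizer_subset[OF that N_le_subset_rank_le] .
  moreover have "T2 \<in> N_le k P R 2"
    if "k = 2" "is_minimizer k P T (rank_le k P 2) T2" "T2 \<in> N_fin k P R" for T2
    using N_fin_inter_rank_le_2_subset[of P R] assms(1) that by (auto simp: is_minimizer_def)
  ultimately show ?thesis
    by blast
qed

end
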